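(* Let $G=([n],E)$ be an undirected graph, and let $\mathrm{CIM}_G=\operatorname{conv}\left(c_\mathcal{G}\colon \mathcal{G}=([n],E')\text{ a DAG with skeleton } G\right)$. Then $\operatorname{diam}(\mathrm{CIM}_G)\leq |E|$.
   Context: For a directed acyclic graph (DAG) $\mathcal{G}$ on vertex set $[n]=\{1,\dots,n\}$, the characteristic imset $c_\mathcal{G}$ is the 0/1-vector indexed by the subsets $S\subseteq[n]$ with $|S|\geq 2$, with $c_\mathcal{G}(S)=1$ if there exists $i\in S$ such that $S\subseteq \mathrm{pa}_\mathcal{G}(i)\cup\{i\}$ (where $\mathrm{pa}_\mathcal{G}(i)$ is the set of parents of $i$), and $c_\mathcal{G}(S)=0$ otherwise. The skeleton of a DAG is the undirected graph with the same vertices and adjacencies. For a polytope $P$, the vertex-edge graph $G(P)$ has the vertices of $P$ as nodes, with two vertices adjacent iff their convex hull is an edge of $P$; $\operatorname{diam}(P)$ is the maximum over pairs of vertices of the length of a shortest path between them in $G(P)$. *)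

theory Defs
  imports "HOL-Analysis.Analysis" "HOL-Analysis.Finite_Function_Topology" "HOL-Library.Extended_Nat"
begin

definition undirected_graph :: "nat \<Rightarrow> nat set set \<Rightarrow> bool" where
  "undirected_graph n E \<longleftrightarrow> (\<forall>e\<in>E. e \<subseteq> {1..n} \<and> card e = 2)"

text \<open>A DAG on [n]: a set of arcs (i,j) meaning i -> j, with no directed cycles
  (in particular no loops).\<close>
definition is_dag :: "nat \<Rightarrow> (nat \<times> nat) set \<Rightarrow> bool" where
  "is_dag n D \<longleftrightarrow> D \<subseteq> {1..n} \<times> {1..n} \<and> acyclic D"

definition skeleton :: "(nat \<times> nat) set \<Rightarrow> nat set set" where
  "skeleton D = {{i, j} | i j. (i, j) \<in> D}"

definition parents :: "(nat \<times> nat) set \<Rightarrow> nat \<Rightarrow> nat set" where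
  "parents D i = {j. (j, i) \<in> D}"

definition char_imset :: "nat \<Rightarrow> (nat \<times> nat) set \<Rightarrow> (nat set \<Rightarrow>\<^sub>0 real)" where
  "char_imset n D = Abs_poly_mapping (\<lambda>S.
     if S \<subseteq> {1..n} \<and> 2 \<le> card S \<and> (\<exists>i\<in>S. S \<subseteq> parents D i \<union> {i}) then 1 else 0)"

definition CIM :: "nat \<Rightarrow> nat set set \<Rightarrow> (nat set \<Rightarrow>\<^sub>0 real) set" where
  "CIM n E = convex hull (char_imset n ` {D. is_dag n D \<and> skeleton D = E})"

definition poly_vertices :: "'a::real_vector set \<Rightarrow> 'a set" where
  "poly_vertices P = {v. v extreme_point_of P}"

definition poly_adjacent :: "'a::real_vector set \<Rightarrow> 'a \<Rightarrow> 'a \<Rightarrow> bool" where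
  "poly_adjacent P u v \<longleftrightarrow> u \<in> poly_vertices P \<and> v \<in> poly_vertices P \<and> u \<noteq> v
     \<and> convex hull {u, v} face_of P"

text \<open>Graph distance in the vertex-edge graph (infinity if not connected).\<close>
definition poly_dist :: "'a::real_vector set \<Rightarrow> 'a \<Rightarrow> 'a \<Rightarrow> enat" where
  "poly_dist P u v = (INF k \<in> {k::nat. \<exists>p. length p = Suc k \<and> hd p = u \<and> last p = v
       \<and> (\<forall>i<k. poly_adjacent P (p ! i) (p ! Suc i))}. enat k)"

definition poly_diam :: "'a::real_vector set \<Rightarrow> enat" where
  "poly_diam P = (SUP u \<in> poly_vertices P. SUP v \<in> poly_vertices P. poly_dist P u v)"

end

theory Submission
  imports Defs
begin

text \<open>
  Two DAGs D1, D2 with skeleton E differ only in the orientation of the arcs in D1 - D2, and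
  these arcs can be reversed one at a time without creating a cycle (always reverse an arc of
  D1 - D2 whose path interval in the current DAG is minimal). For a single reversal D \<rightarrow> D'
  the segment between c_D and c_D' is a face of CIM_E: the 0/1 vectors agreeing with c_D and
  c_D' wherever these two agree form a face, and inside it a second linear functional, built
  from the sets the reversal removes from or adds to the support of the imset, is maximised
  exactly at c_D and c_D'. So consecutive imsets along the sequence are equal or adjacent,
  and the distance is at most |D1 - D2| \<le> |E|.
\<close>

section \<open>Faces of polytopes\<close>

lemma lookup_scaleR_poly_mapping:
  fixes x :: "'a \<Rightarrow>\<^sub>0 'b::real_vector"
  shows "Poly_Mapping.lookup (r *\<^sub>R x) i = r *\<^sub>R Poly_Mapping.lookup x i"
proof -
  have "finite {i. r *\<^sub>R Poly_Mapping.lookup x i \<noteq> (0::'b)}"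
    by (rule finite_subset[of _ "Poly_Mapping.keys x"]) (auto simp: in_keys_iff)
  then show ?thesis by (simp add: scaleR_poly_mapping_def)
qed

lemma linear_le_on_convex_hull:
  fixes l :: "'a::real_vector \<Rightarrow> real"
  assumes "linear l" "\<And>w. w \<in> W \<Longrightarrow> l w \<le> m" "x \<in> convex hull W"
  shows "l x \<le> m"
proof -
  have "convex (l -` {..m})"
    using assms(1) by (rule convex_linear_vimage) simp
  then have "convex hull W \<subseteq> l -` {..m}"
    using assms(2) by (intro hull_minimal) auto
  then show ?thesis using assms(3) by auto
qed

lemma face_of_Int_linear_supporting_le:
  fixes l :: "'a::real_vector \<Rightarrow> real"
  assumes "convex S" "linear l" "\<And>x. x \<in> S \<Longrightarrow> l x \<le> m"
  shows "S \<inter> {x. l x = m} face_of S"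
  unfolding face_of_def
proof (intro conjI ballI impI)
  have "convex {x. l x = m}"
    using convex_linear_vimage[OF assms(2) convex_singleton] by (simp add: vimage_def)
  then show "convex (S \<inter> {x. l x = m})"
    by (intro convex_Int assms(1))
next
  fix u v x assume u: "u \<in> S" and v: "v \<in> S" and x: "x \<in> S \<inter> {x. l x = m}"
    and seg: "x \<in> open_segment u v"
  obtain t where t: "0 < t" "t < 1" "x = (1 - t) *\<^sub>R u + t *\<^sub>R v"
    using seg by (auto simp: in_segment)
  have "l x = (1 - t) * l u + t * l v"
    using t(3) by (simp add: linear_add[OF assms(2)] linear_scale[OF assms(2)])
  then have "(1 - t) * (m - l u) + t * (m - l v) = 0"
    using x by (simp add: algebra_simps)
  moreover have "0 \<le> (1 - t) * (m - l u)" "0 \<le> t * (m - l v)"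
    using t assms(3)[OF u] assms(3)[OF v] by simp_all
  ultimately have "(1 - t) * (m - l u) = 0" "t * (m - l v) = 0"
    by linarith+
  then show "u \<in> S \<inter> {x. l x = m}" "v \<in> S \<inter> {x. l x = m}"
    using t u v by auto
qed (use assms in auto)

lemma convex_hull_Int_linear_level:
  fixes l :: "'a::real_vector \<Rightarrow> real"
  assumes W: "finite W" and l: "linear l" and le: "\<And>w. w \<in> W \<Longrightarrow> l w \<le> m"
  shows "convex hull W \<inter> {x. l x = m} = convex hull {w\<in>W. l w = m}"
proof
  have "convex {x. l x = m}"
    using convex_linear_vimage[OF l convex_singleton] by (simp add: vimage_def)
  then have "convex hull {w\<in>W. l w = m} \<subseteq> {x. l x = m}"
    by (intro hull_minimal) auto
  moreover have "convex hull {w\<in>W. l w = m} \<subseteq> convex hull W"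
    by (rule hull_mono) auto
  ultimately show "convex hull {w\<in>W. l w = m} \<subseteq> convex hull W \<inter> {x. l x = m}"
    by blast
next
  show "convex hull W \<inter> {x. l x = m} \<subseteq> convex hull {w\<in>W. l w = m}"
  proof
    fix x assume "x \<in> convex hull W \<inter> {x. l x = m}"
    then obtain u where u: "\<forall>w\<in>W. 0 \<le> u w" "sum u W = 1" "(\<Sum>w\<in>W. u w *\<^sub>R w) = x"
      and lx: "l x = m"
      by (auto simp: convex_hull_finite[OF W])
    have "l x = l (\<Sum>w\<in>W. u w *\<^sub>R w)"
      using u(3) by simp
    also have "\<dots> = (\<Sum>w\<in>W. u w * l w)"
      by (simp add: linear_sum[OF l] linear_scale[OF l])
    finally have "(\<Sum>w\<in>W. u w * (m - l w)) = 0"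
      using lx u(2) by (simp add: right_diff_distrib sum_subtractf sum_distrib_right[symmetric])
    then have "\<forall>w\<in>W. u w * (m - l w) = 0"
      using u(1) le by (subst (asm) sum_nonneg_eq_0_iff[OF W]) auto
    then have off: "u w = 0" if "w \<in> W - {w\<in>W. l w = m}" for w
      using that le[of w] by auto
    have "sum u {w\<in>W. l w = m} = 1"
      using u(2) off sum.mono_neutral_left[OF W, of "{w\<in>W. l w = m}" u] by auto
    moreover have "(\<Sum>w\<in>{w\<in>W. l w = m}. u w *\<^sub>R w) = x"
      using u(3) off sum.mono_neutral_left[OF W, of "{w\<in>W. l w = m}" "\<lambda>w. u w *\<^sub>R w"] by auto
    ultimately show "x \<in> convex hull {w\<in>W. l w = m}"
      using u(1) W by (auto simp: convex_hull_finite)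
  qed
qed

lemma face_of_convex_hull_linear_max:
  fixes l :: "'a::real_vector \<Rightarrow> real"
  assumes "finite W" "linear l" "\<And>w. w \<in> W \<Longrightarrow> l w \<le> m"
  shows "convex hull {w\<in>W. l w = m} face_of convex hull W"
  using face_of_Int_linear_supporting_le[OF convex_convex_hull assms(2), of W m]
    linear_le_on_convex_hull[OF assms(2,3)] convex_hull_Int_linear_level[OF assms]
  by simp

lemma lookup_zero_one_eq:
  assumes "Poly_Mapping.lookup w i \<in> {0, 1::real}"
  shows "Poly_Mapping.lookup w i = of_bool (i \<in> Poly_Mapping.keys w)"
  using assms by (auto simp: in_keys_iff)

lemma face_of_convex_hull_zero_one_between:
  fixes W :: "('a \<Rightarrow>\<^sub>0 real) set" and u v :: "'a \<Rightarrow>\<^sub>0 real"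
  assumes W: "finite W" and zero_one: "\<And>w i. w \<in> W \<Longrightarrow> Poly_Mapping.lookup w i \<in> {0, 1}"
  shows "convex hull {w\<in>W. Poly_Mapping.keys u \<inter> Poly_Mapping.keys v \<subseteq> Poly_Mapping.keys w
      \<and> Poly_Mapping.keys w \<subseteq> Poly_Mapping.keys u \<union> Poly_Mapping.keys v} face_of convex hull W"
proof -
  define I where "I = Poly_Mapping.keys u \<inter> Poly_Mapping.keys v"
  define J where "J = \<Union>(Poly_Mapping.keys ` W) - (Poly_Mapping.keys u \<union> Poly_Mapping.keys v)"
  define l :: "('a \<Rightarrow>\<^sub>0 real) \<Rightarrow> real"
    where "l x = (\<Sum>i\<in>I. Poly_Mapping.lookup x i) - (\<Sum>i\<in>J. Poly_Mapping.lookup x i)" for x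
  have fin: "finite I" "finite J"
    using W by (auto simp: I_def J_def)
  have "linear l"
    by (rule linearI) (simp_all add: l_def lookup_add lookup_scaleR_poly_mapping sum.distrib
        sum_distrib_left algebra_simps)
  have l_card: "l w = real (card (I \<inter> Poly_Mapping.keys w)) - real (card (J \<inter> Poly_Mapping.keys w))"
    if "w \<in> W" for w
    using fin zero_one[OF that] by (simp add: l_def lookup_zero_one_eq)
  have between_iff: "l w = card I \<longleftrightarrow> I \<subseteq> Poly_Mapping.keys w
      \<and> Poly_Mapping.keys w \<subseteq> Poly_Mapping.keys u \<union> Poly_Mapping.keys v"
    if "w \<in> W" for w
  proof -
    have "card (I \<inter> Poly_Mapping.keys w) \<le> card I"
      using fin by (simp add: card_mono)
    then have "l w = card I \<longleftrightarrow> card (I \<inter> Poly_Mapping.keys w) = card I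
        \<and> card (J \<inter> Poly_Mapping.keys w) = 0"
      using l_card[OF that] by linarith
    also have "\<dots> \<longleftrightarrow> I \<subseteq> Poly_Mapping.keys w \<and> J \<inter> Poly_Mapping.keys w = {}"
      using fin by (metis Int_lower1 card_0_eq card_subset_eq finite_Int inf.absorb_iff1)
    finally show ?thesis
      using that by (auto simp: J_def)
  qed
  have "convex hull {w\<in>W. l w = card I} face_of convex hull W"
  proof (rule face_of_convex_hull_linear_max[OF W \<open>linear l\<close>])
    show "l w \<le> card I" if "w \<in> W" for w
      using l_card[OF that] card_mono[OF fin(1), of "I \<inter> Poly_Mapping.keys w"] by simp
  qed
  then show ?thesis
    using between_iff by (simp add: I_def cong: Collect_cong conj_cong)
qed

lemma poly_adjacentI:
  fixes u v :: "'a::real_vector"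
  assumes "convex hull {u, v} face_of P" "u \<noteq> v"
  shows "poly_adjacent P u v"
proof -
  have "u extreme_point_of convex hull {u, v}" "v extreme_point_of convex hull {u, v}"
    using assms(2) extreme_point_of_convex_hull_insert[of "{v}" u]
      extreme_point_of_convex_hull_insert[of "{u}" v]
    by (auto simp: insert_commute)
  then show ?thesis
    using assms extreme_point_of_face[OF assms(1)]
    by (auto simp: poly_adjacent_def poly_vertices_def hull_inc)
qed

lemma poly_dist_le_walk:
  assumes "successively (poly_adjacent P) p" "p \<noteq> []"
  shows "poly_dist P (hd p) (last p) \<le> enat (length p - 1)"
  unfolding poly_dist_def
  by (rule INF_lower) (use assms in \<open>auto simp: successively_conv_nth\<close>)

section \<open>DAGs and the supports of their imsets\<close>

definition family :: "(nat \<times> nat) set \<Rightarrow> nat \<Rightarrow> nat set" where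
  "family D i = insert i (parents D i)"

definition imset_support :: "nat \<Rightarrow> (nat \<times> nat) set \<Rightarrow> nat set set" where
  "imset_support n D = {S. S \<subseteq> {1..n} \<and> 2 \<le> card S \<and> (\<exists>i\<in>S. S \<subseteq> family D i)}"

lemma finite_imset_support: "finite (imset_support n D)"
  by (rule finite_subset[of _ "Pow {1..n}"]) (auto simp: imset_support_def)

lemma lookup_char_imset:
  "Poly_Mapping.lookup (char_imset n D) S = of_bool (S \<in> imset_support n D)"
proof -
  have "finite {S. of_bool (S \<in> imset_support n D) \<noteq> (0::real)}"
    using finite_imset_support by simp
  then show ?thesis
    by (simp add: char_imset_def imset_support_def family_def Un_commute)
qed

lemma keys_char_imset: "Poly_Mapping.keys (char_imset n D) = imset_support n D"
  by (auto simp: in_keys_iff lookup_char_imset)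

lemma char_imset_eq_iff:
  "char_imset n D = char_imset n D2 \<longleftrightarrow> imset_support n D = imset_support n D2"
  by (metis keys_char_imset lookup_char_imset poly_mapping_eqI)

lemma finite_dag: "is_dag n D \<Longrightarrow> finite D"
  unfolding is_dag_def by (auto intro: finite_subset)

lemma dag_asym: "is_dag n D \<Longrightarrow> (x, y) \<in> D \<Longrightarrow> (y, x) \<notin> D"
  unfolding is_dag_def acyclic_def by (meson trancl.simps trancl_trans)

lemma dag_no_3cycle: "is_dag n D \<Longrightarrow> (x, y) \<in> D \<Longrightarrow> (y, z) \<in> D \<Longrightarrow> (z, x) \<notin> D"
  unfolding is_dag_def acyclic_def by (meson trancl.simps trancl_trans)

lemma parents_subset: "is_dag n D \<Longrightarrow> parents D i \<subseteq> {1..n}"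
  unfolding is_dag_def parents_def by blast

lemma finite_dags_with_skeleton: "finite {D. is_dag n D \<and> skeleton D = E}"
  by (rule finite_subset[of _ "Pow ({1..n} \<times> {1..n})"]) (auto simp: is_dag_def)

lemma arc_of_same_skeleton:
  assumes "skeleton D2 = skeleton D" "(x, y) \<in> D2"
  shows "(x, y) \<in> D \<or> (y, x) \<in> D"
proof -
  have "{x, y} \<in> skeleton D"
    using assms unfolding skeleton_def by blast
  then show ?thesis
    unfolding skeleton_def by (auto simp: doubleton_eq_iff)
qed

lemma card_dag_le_card_skeleton:
  assumes "is_dag n D"
  shows "card D \<le> card (skeleton D)"
proof -
  have "inj_on (\<lambda>(i, j). {i, j}) D"
    using dag_asym[OF assms] by (auto intro!: inj_onI simp: doubleton_eq_iff)
  moreover have "skeleton D = (\<lambda>(i, j). {i, j}) ` D"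
    unfolding skeleton_def by auto
  ultimately show ?thesis
    by (simp add: card_image)
qed

lemma dag_eq_if_subset:
  assumes "is_dag n D2" "skeleton D1 = skeleton D2" "D1 \<subseteq> D2"
  shows "D1 = D2"
  using assms arc_of_same_skeleton[OF assms(2)[symmetric]] dag_asym[OF assms(1)] by fast

section \<open>Reversing one arc\<close>

definition reverse_arc :: "nat \<Rightarrow> nat \<Rightarrow> (nat \<times> nat) set \<Rightarrow> (nat \<times> nat) set" where
  "reverse_arc a b D = insert (b, a) (D - {(a, b)})"

definition lost_sets :: "nat \<Rightarrow> (nat \<times> nat) set \<Rightarrow> (nat \<times> nat) set \<Rightarrow> nat set set" where
  "lost_sets n D D' = imset_support n D - imset_support n D'"

lemma finite_lost_sets: "finite (lost_sets n D D')"
  by (simp add: lost_sets_def finite_imset_support)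

lemma lost_sets_subset: "lost_sets n D D' \<subseteq> imset_support n D"
  by (auto simp: lost_sets_def)

locale arc_reversal =
  fixes n :: nat and D D' :: "(nat \<times> nat) set" and a b :: nat
  assumes dag: "is_dag n D" and dag': "is_dag n D'" and arc: "(a, b) \<in> D"
    and reversed: "D' = reverse_arc a b D"
begin

lemma tail_neq_head: "a \<noteq> b"
  using dag_asym[OF dag arc] arc by auto

lemma arc_reversal_sym: "arc_reversal n D' D b a"
proof
  show "D = reverse_arc b a D'"
    using arc dag_asym[OF dag arc] by (auto simp: reversed reverse_arc_def)
qed (use dag dag' in \<open>auto simp: reversed reverse_arc_def\<close>)

lemma skeleton_reversed: "skeleton D' = skeleton D"
  using arc unfolding skeleton_def reversed reverse_arc_def by (auto simp: insert_commute)

lemma family_reversed: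
  "i \<noteq> a \<Longrightarrow> i \<noteq> b \<Longrightarrow> family D' i = family D i"
  "family D' b = family D b - {a}"
  "family D' a = insert b (family D a)"
  using tail_neq_head by (auto simp: family_def parents_def reversed reverse_arc_def)

lemma lost_set_shape:
  assumes S: "S \<in> lost_sets n D D'"
  shows "a \<in> S \<and> b \<in> S \<and> S \<subseteq> family D b
    \<and> (\<exists>t\<in>S. t \<in> parents D b - {a} \<and> (a, t) \<notin> D \<and> (t, a) \<notin> D)"
proof -
  have not_in_family': "\<not> S \<subseteq> family D' i" if "i \<in> S" for i
    using S that by (auto simp: lost_sets_def imset_support_def)
  obtain i where i: "i \<in> S" "S \<subseteq> family D i"
    using S by (auto simp: lost_sets_def imset_support_def)
  have "i = b"
    using not_in_family'[OF i(1)] i(2) family_reversed(1,3) by (metis subset_insertI2)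
  then have bS: "b \<in> S" and S_family: "S \<subseteq> family D b"
    using i by auto
  have aS: "a \<in> S"
    using not_in_family'[OF bS] S_family family_reversed(2) by blast
  obtain t where t: "t \<in> S" "t \<notin> family D' a"
    using not_in_family'[OF aS] by blast
  then have tb: "t \<in> parents D b - {a}" and ta: "(t, a) \<notin> D"
    using S_family family_reversed(3) by (auto simp: family_def parents_def)
  have "(a, t) \<notin> D"
  proof
    assume "(a, t) \<in> D"
    then have "(a, t) \<in> D'" "(t, b) \<in> D'" "(b, a) \<in> D'"
      using t tb by (auto simp: reversed reverse_arc_def family_def parents_def)
    then show False
      using dag_no_3cycle[OF dag'] by blast
  qed
  then show ?thesis
    using aS bS S_family t tb ta by blast
qed

lemma family_lost:
  assumes "lost_sets n D D' \<noteq> {}"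
  shows "family D b \<in> lost_sets n D D'"
proof -
  obtain t where t: "t \<in> parents D b - {a}" "(t, a) \<notin> D"
    using assms lost_set_shape by blast
  have ab_family: "a \<in> family D b" "b \<in> family D b"
    using arc by (auto simp: family_def parents_def)
  have sub: "family D b \<subseteq> {1..n}"
    using dag arc parents_subset[OF dag] by (auto simp: family_def is_dag_def)
  then have "card {a, b} \<le> card (family D b)"
    using ab_family by (intro card_mono) (auto intro: finite_subset)
  then have "family D b \<in> imset_support n D"
    using sub ab_family tail_neq_head by (auto simp: imset_support_def)
  moreover have "\<not> family D b \<subseteq> family D' i" if i: "i \<in> family D b" for i
  proof -
    consider "i = b" | "i = a" | "i \<in> parents D b - {a}"
      using i by (auto simp: family_def)
    then show ?thesis
    proof cases
      case 1
      then show ?thesis using ab_family family_reversed(2) by auto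
    next
      case 2
      then show ?thesis
        using t family_reversed(3) dag_asym[OF dag] by (auto simp: family_def parents_def)
    next
      case 3
      then have "i \<noteq> b" "(i, b) \<in> D"
        using dag_asym[OF dag] by (auto simp: parents_def)
      then show ?thesis
        using 3 dag_asym[OF dag] family_reversed(1)[of i]
        by (auto simp: family_def parents_def)
    qed
  qed
  then have "family D b \<notin> imset_support n D'"
    by (auto simp: imset_support_def)
  ultimately show ?thesis
    by (simp add: lost_sets_def)
qed

lemma unshielded_triple_not_in_supports:
  assumes t: "t \<in> parents D b - {a}" "(a, t) \<notin> D" "(t, a) \<notin> D"
    and j: "j \<noteq> a" "j \<noteq> b" "(a, j) \<notin> D"
  shows "{a, j, t} \<notin> imset_support n D \<union> imset_support n D'"
proof -
  have "t \<noteq> b"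
    using t dag_asym[OF dag] by (auto simp: parents_def)
  have "t \<notin> family D' a" "a \<notin> family D' j" "a \<notin> family D' t"
    using t \<open>t \<noteq> b\<close> j family_reversed(1,3) by (auto simp: family_def parents_def)
  then have "\<not> {a, j, t} \<subseteq> family D' k" if "k \<in> {a, j, t}" for k
    using that by auto
  moreover have "family D k \<subseteq> family D' k" if "k \<in> {a, j, t}" for k
    using that \<open>t \<noteq> b\<close> t(1) j family_reversed(1,3) by auto
  ultimately show ?thesis
    by (fastforce simp: imset_support_def)
qed

end

locale reversal_between = arc_reversal +
  fixes D2 :: "(nat \<times> nat) set"
  assumes dag2: "is_dag n D2" and skeleton2: "skeleton D2 = skeleton D"
    and common_subset: "imset_support n D \<inter> imset_support n D' \<subseteq> imset_support n D2"
    and subset_union: "imset_support n D2 \<subseteq> imset_support n D \<union> imset_support n D'"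

context arc_reversal
begin

lemma reversal_betweenI:
  assumes "is_dag n D2" "skeleton D2 = skeleton D"
    and "imset_support n D \<inter> imset_support n D' \<subseteq> imset_support n D2"
    and "imset_support n D2 \<subseteq> imset_support n D \<union> imset_support n D'"
  shows "reversal_between n D D' a b D2"
  using assms by (intro reversal_between.intro reversal_between_axioms.intro) unfold_locales

end

context reversal_between
begin

lemma reversal_between_sym: "reversal_between n D' D b a D2"
proof -
  interpret rev: arc_reversal n D' D b a
    by (rule arc_reversal_sym)
  show ?thesis
    using dag2 skeleton2 skeleton_reversed common_subset subset_union
    by (intro rev.reversal_betweenI) auto
qed

text \<open>
  Otherwise the sink j of S in D2 is not b, and a \<rightarrow> j \<leftarrow> t is an unshielded collider of
  D2 that neither D nor D' has.
\<close>
lemma lost_set_subset_head_family: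
  assumes S: "S \<in> lost_sets n D D'" "S \<in> imset_support n D2"
  shows "S \<subseteq> family D2 b"
proof (rule ccontr)
  assume not_b: "\<not> S \<subseteq> family D2 b"
  obtain t where aS: "a \<in> S" and S_family: "S \<subseteq> family D b"
    and t: "t \<in> S" "t \<in> parents D b - {a}" "(a, t) \<notin> D" "(t, a) \<notin> D"
    using lost_set_shape[OF S(1)] by blast
  obtain j where j: "j \<in> S" "S \<subseteq> family D2 j" and S_range: "S \<subseteq> {1..n}"
    using S(2) by (auto simp: imset_support_def)
  have "(a, t) \<notin> D2" "(t, a) \<notin> D2"
    using arc_of_same_skeleton[OF skeleton2] t by blast+
  then have "j \<noteq> b" "j \<noteq> a" "j \<noteq> t"
    using j aS t not_b by (auto simp: family_def parents_def)
  then have aj2: "(a, j) \<in> D2" and tj2: "(t, j) \<in> D2"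
    using j aS t by (auto simp: family_def parents_def)
  have "(j, b) \<in> D"
    using S_family j \<open>j \<noteq> b\<close> by (auto simp: family_def parents_def)
  then have "(a, j) \<notin> D"
    using dag_no_3cycle[OF dag', of a j b] \<open>j \<noteq> a\<close> \<open>j \<noteq> b\<close>
    by (auto simp: reversed reverse_arc_def)
  have "{a, j, t} \<in> imset_support n D2"
    using S_range aS j t aj2 tj2 \<open>j \<noteq> a\<close>
    by (auto simp: imset_support_def family_def parents_def card_insert_if)
  then show False
    using unshielded_triple_not_in_supports[OF t(2-4) \<open>j \<noteq> a\<close> \<open>j \<noteq> b\<close> \<open>(a, j) \<notin> D\<close>]
      subset_union by blast
qed

lemma lost_and_gained_not_both:
  "lost_sets n D D' \<inter> imset_support n D2 = {} \<or> lost_sets n D' D \<inter> imset_support n D2 = {}"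
proof (rule ccontr)
  interpret rev: reversal_between n D' D b a D2
    by (rule reversal_between_sym)
  assume "\<not> ?thesis"
  then obtain S S' where S: "S \<in> lost_sets n D D'" "S \<in> imset_support n D2"
    and S': "S' \<in> lost_sets n D' D" "S' \<in> imset_support n D2"
    by blast
  have "(a, b) \<in> D2"
    using lost_set_subset_head_family[OF S] lost_set_shape[OF S(1)] tail_neq_head
    by (auto simp: family_def parents_def)
  moreover have "(b, a) \<in> D2"
    using rev.lost_set_subset_head_family[OF S'] rev.lost_set_shape[OF S'(1)] tail_neq_head
    by (auto simp: family_def parents_def)
  ultimately show False
    using dag_asym[OF dag2] by blast
qed

lemma lost_sets_subset_support:
  assumes "family D b \<in> imset_support n D2" "lost_sets n D D' \<noteq> {}"
  shows "lost_sets n D D' \<subseteq> imset_support n D2"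
proof
  fix S assume S: "S \<in> lost_sets n D D'"
  have "family D b \<subseteq> family D2 b"
    using lost_set_subset_head_family family_lost assms by blast
  then show "S \<in> imset_support n D2"
    using lost_set_shape[OF S] S by (auto simp: lost_sets_def imset_support_def)
qed

end

text \<open>
  On the imset of a DAG D2 between D and D', the functional below equals minus the number of
  lost sets in the support of D2, unless the family of b lies in that support, in which case
  the support is that of D (and symmetrically for D'). The weights are chosen so that exactly
  c_D and c_D' attain the maximum.
\<close>

definition lost_weight :: "nat \<Rightarrow> (nat \<times> nat) set \<Rightarrow> (nat \<times> nat) set \<Rightarrow> real" where
  "lost_weight n D D' =
     (if lost_sets n D D' = {} then 0
      else real (card (lost_sets n D D')) + of_bool (lost_sets n D' D \<noteq> {}))"

definition reversal_functional ::
    "nat \<Rightarrow> (nat \<times> nat) set \<Rightarrow> (nat \<times> nat) set \<Rightarrow> nat \<Rightarrow> nat \<Rightarrow> (nat set \<Rightarrow>\<^sub>0 real) \<Rightarrow> real" where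
  "reversal_functional n D D' a b x =
     lost_weight n D D' * Poly_Mapping.lookup x (family D b)
     + lost_weight n D' D * Poly_Mapping.lookup x (family D' a)
     - (\<Sum>S \<in> lost_sets n D D' \<union> lost_sets n D' D. Poly_Mapping.lookup x S)"

lemma reversal_functional_sym: "reversal_functional n D D' a b = reversal_functional n D' D b a"
  by (rule ext) (simp add: reversal_functional_def Un_commute)

lemma linear_reversal_functional: "linear (reversal_functional n D D' a b)"
  by (rule linearI) (simp_all add: reversal_functional_def lookup_add lookup_scaleR_poly_mapping
      sum.distrib sum_distrib_left algebra_simps)

lemma sum_lookup_char_imset:
  "finite A \<Longrightarrow> (\<Sum>S\<in>A. Poly_Mapping.lookup (char_imset n D) S) = real (card (A \<inter> imset_support n D))"
  by (simp add: lookup_char_imset)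

lemma (in arc_reversal) weighted_family_term_eq_0:
  assumes "lost_sets n D D' \<inter> imset_support n D2 = {}"
  shows "lost_weight n D D' * Poly_Mapping.lookup (char_imset n D2) (family D b) = 0"
  using assms family_lost by (cases "lost_sets n D D' = {}") (auto simp: lost_weight_def lookup_char_imset)

context reversal_between
begin

lemma reversal_functional_if_lost:
  assumes "lost_sets n D D' \<inter> imset_support n D2 \<noteq> {}"
  shows "reversal_functional n D D' a b (char_imset n D2) =
    (if imset_support n D2 = imset_support n D then of_bool (lost_sets n D' D \<noteq> {})
     else - real (card (lost_sets n D D' \<inter> imset_support n D2)))"
proof -
  interpret rev: reversal_between n D' D b a D2
    by (rule reversal_between_sym)
  have lost: "lost_sets n D D' \<noteq> {}"
    using assms by auto
  have gained: "lost_sets n D' D \<inter> imset_support n D2 = {}"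
    using lost_and_gained_not_both assms by auto
  then have "(lost_sets n D D' \<union> lost_sets n D' D) \<inter> imset_support n D2
      = lost_sets n D D' \<inter> imset_support n D2"
    by auto
  then have functional_eq: "reversal_functional n D D' a b (char_imset n D2)
      = lost_weight n D D' * Poly_Mapping.lookup (char_imset n D2) (family D b)
        - real (card (lost_sets n D D' \<inter> imset_support n D2))"
    using rev.weighted_family_term_eq_0[OF gained]
    by (simp add: reversal_functional_def sum_lookup_char_imset finite_lost_sets)
  show ?thesis
  proof (cases "family D b \<in> imset_support n D2")
    case True
    then have "lost_sets n D D' \<subseteq> imset_support n D2"
      using lost_sets_subset_support lost by blast
    then have "imset_support n D2 = imset_support n D"
      using common_subset subset_union gained by (auto simp: lost_sets_def)
    then show ?thesis
      using functional_eq True lost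
      by (simp add: lost_weight_def lookup_char_imset Int_absorb2 lost_sets_subset)
  next
    case False
    then have "imset_support n D2 \<noteq> imset_support n D"
      using family_lost[OF lost] by (auto simp: lost_sets_def)
    then show ?thesis
      using functional_eq False by (simp add: lookup_char_imset)
  qed
qed

lemma reversal_functional_if_neither:
  assumes "lost_sets n D D' \<inter> imset_support n D2 = {}" "lost_sets n D' D \<inter> imset_support n D2 = {}"
  shows "reversal_functional n D D' a b (char_imset n D2) = 0"
proof -
  interpret rev: reversal_between n D' D b a D2
    by (rule reversal_between_sym)
  have "(lost_sets n D D' \<union> lost_sets n D' D) \<inter> imset_support n D2 = {}"
    using assms by auto
  then show ?thesis
    by (simp add: reversal_functional_def sum_lookup_char_imset finite_lost_sets
        weighted_family_term_eq_0[OF assms(1)] rev.weighted_family_term_eq_0[OF assms(2)])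
qed

theorem reversal_functional_max:
  defines "M \<equiv> of_bool (lost_sets n D D' \<noteq> {} \<and> lost_sets n D' D \<noteq> {})"
  shows "reversal_functional n D D' a b (char_imset n D2) \<le> M"
    and "reversal_functional n D D' a b (char_imset n D2) = M \<Longrightarrow>
      imset_support n D2 = imset_support n D \<or> imset_support n D2 = imset_support n D'"
proof -
  interpret rev: reversal_between n D' D b a D2
    by (rule reversal_between_sym)
  have negative: "- real (card (L \<inter> imset_support n D2)) < 0"
    if "L \<inter> imset_support n D2 \<noteq> {}" "finite L" for L
    using that by (simp add: card_gt_0_iff)
  consider (lost) "lost_sets n D D' \<inter> imset_support n D2 \<noteq> {}"
    | (gained) "lost_sets n D' D \<inter> imset_support n D2 \<noteq> {}"
    | (neither) "lost_sets n D D' \<inter> imset_support n D2 = {}"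
        "lost_sets n D' D \<inter> imset_support n D2 = {}"
    by blast
  then have "reversal_functional n D D' a b (char_imset n D2) \<le> M \<and>
      (reversal_functional n D D' a b (char_imset n D2) = M \<longrightarrow>
        imset_support n D2 = imset_support n D \<or> imset_support n D2 = imset_support n D')"
  proof cases
    case lost
    then show ?thesis
      using reversal_functional_if_lost[OF lost] negative[OF lost finite_lost_sets]
      by (auto simp: M_def)
  next
    case gained
    then show ?thesis
      using rev.reversal_functional_if_lost[OF gained] negative[OF gained finite_lost_sets]
        reversal_functional_sym[of n D D' a b]
      by (auto simp: M_def)
  next
    case neither
    moreover have "imset_support n D2 = imset_support n D \<inter> imset_support n D'"
      using neither common_subset subset_union by (auto simp: lost_sets_def)
    ultimately show ?thesis
      using reversal_functional_if_neither[OF neither]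
      by (auto simp: M_def lost_sets_def)
  qed
  then show "reversal_functional n D D' a b (char_imset n D2) \<le> M"
    and "reversal_functional n D D' a b (char_imset n D2) = M \<Longrightarrow>
      imset_support n D2 = imset_support n D \<or> imset_support n D2 = imset_support n D'"
    by blast+
qed

end

context arc_reversal
begin

lemma reversal_functional_self:
  "reversal_functional n D D' a b (char_imset n D) =
    of_bool (lost_sets n D D' \<noteq> {} \<and> lost_sets n D' D \<noteq> {})"
proof -
  interpret reversal_between n D D' a b D
    using dag by (intro reversal_betweenI) auto
  have "lost_sets n D' D \<inter> imset_support n D = {}"
    by (auto simp: lost_sets_def)
  moreover have "lost_sets n D D' \<inter> imset_support n D = lost_sets n D D'"
    by (auto simp: lost_sets_def)
  ultimately show ?thesis
    using reversal_functional_if_lost reversal_functional_if_neither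
    by (cases "lost_sets n D D' = {}") auto
qed

lemma reversal_functional_reversed:
  "reversal_functional n D D' a b (char_imset n D') =
    of_bool (lost_sets n D D' \<noteq> {} \<and> lost_sets n D' D \<noteq> {})"
proof -
  interpret rev: arc_reversal n D' D b a
    by (rule arc_reversal_sym)
  show ?thesis
    using rev.reversal_functional_self reversal_functional_sym[of n D D' a b] by auto
qed

theorem reversal_edge_face:
  "convex hull {char_imset n D, char_imset n D'} face_of CIM n (skeleton D)"
proof -
  define W where "W = char_imset n ` {D2. is_dag n D2 \<and> skeleton D2 = skeleton D}"
  define W0 where "W0 = {w\<in>W. Poly_Mapping.keys (char_imset n D) \<inter> Poly_Mapping.keys (char_imset n D')
      \<subseteq> Poly_Mapping.keys w \<and> Poly_Mapping.keys w
      \<subseteq> Poly_Mapping.keys (char_imset n D) \<union> Poly_Mapping.keys (char_imset n D')}"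
  define M :: real where "M = of_bool (lost_sets n D D' \<noteq> {} \<and> lost_sets n D' D \<noteq> {})"
  have W: "finite W"
    using finite_dags_with_skeleton by (simp add: W_def)
  have face0: "convex hull W0 face_of convex hull W"
    unfolding W0_def using W
    by (rule face_of_convex_hull_zero_one_between) (auto simp: W_def lookup_char_imset)
  have max_W0: "reversal_functional n D D' a b w \<le> M \<and>
      (reversal_functional n D D' a b w = M \<longrightarrow> w \<in> {char_imset n D, char_imset n D'})"
    if "w \<in> W0" for w
  proof -
    obtain D2 where D2: "is_dag n D2" "skeleton D2 = skeleton D" "w = char_imset n D2"
      using \<open>w \<in> W0\<close> by (auto simp: W0_def W_def)
    then interpret reversal_between n D D' a b D2
      using \<open>w \<in> W0\<close> by (intro reversal_betweenI) (auto simp: W0_def keys_char_imset)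
    show ?thesis
      using reversal_functional_max D2(3) by (auto simp: M_def char_imset_eq_iff)
  qed
  have ends: "char_imset n D \<in> W0" "char_imset n D' \<in> W0"
    using dag dag' skeleton_reversed by (auto simp: W0_def W_def)
  have "reversal_functional n D D' a b (char_imset n D) = M"
    "reversal_functional n D D' a b (char_imset n D') = M"
    using reversal_functional_self reversal_functional_reversed by (simp_all add: M_def)
  then have "{w\<in>W0. reversal_functional n D D' a b w = M} = {char_imset n D, char_imset n D'}"
    using max_W0 ends by blast
  moreover have "convex hull {w\<in>W0. reversal_functional n D D' a b w = M} face_of convex hull W0"
    using W max_W0 by (intro face_of_convex_hull_linear_max linear_reversal_functional) (auto simp: W0_def)
  ultimately show ?thesis
    using face_of_trans face0 by (fastforce simp: CIM_def W_def)
qed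

end

section \<open>Sequences of reversals\<close>

lemma rtrancl_leaves_subset:
  assumes "(x, y) \<in> R\<^sup>*"
  shows "(x, y) \<in> S\<^sup>* \<or> (\<exists>p q. (p, q) \<in> R - S \<and> (x, p) \<in> R\<^sup>* \<and> (q, y) \<in> R\<^sup>*)"
  using assms
proof (induction rule: rtrancl_induct)
  case (step y z)
  then show ?case
    by (cases "(y, z) \<in> S") (blast intro: rtrancl_into_rtrancl)+
qed simp

definition path_interval :: "('a \<times> 'a) set \<Rightarrow> 'a \<Rightarrow> 'a \<Rightarrow> 'a set" where
  "path_interval D x y = {z. (x, z) \<in> D\<^sup>* \<and> (z, y) \<in> D\<^sup>*}"

lemma finite_path_interval:
  assumes "finite D"
  shows "finite (path_interval D x y)"
proof (rule finite_subset)
  have "z \<in> insert x (snd ` D)" if "(x, z) \<in> D\<^sup>*" for z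
    using that by (cases rule: rtranclE) force+
  then show "path_interval D x y \<subseteq> insert x (snd ` D)"
    by (auto simp: path_interval_def)
qed (use assms in simp)

lemma path_interval_psubset:
  assumes "acyclic D" "(a, p) \<in> D\<^sup>*" "(p, q) \<in> D\<^sup>*" "(q, b) \<in> D\<^sup>*" "(p, q) \<noteq> (a, b)"
  shows "path_interval D p q \<subset> path_interval D a b"
proof -
  have sub: "path_interval D p q \<subseteq> path_interval D a b"
    using assms(2,4) by (auto simp: path_interval_def intro: rtrancl_trans)
  have ends: "a \<in> path_interval D a b" "b \<in> path_interval D a b"
    using assms(2-4) by (auto simp: path_interval_def intro: rtrancl_trans)
  have "a \<notin> path_interval D p q \<or> b \<notin> path_interval D p q"
    using assms acyclic_impl_antisym_rtrancl[OF assms(1)]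
    by (auto simp: path_interval_def antisym_def)
  then show ?thesis
    using sub ends by blast
qed

lemma is_dag_reverse_arc:
  assumes "is_dag n D" "(a, b) \<in> D" "(a, b) \<notin> (D - {(a, b)})\<^sup>*"
  shows "is_dag n (reverse_arc a b D)"
proof -
  have "acyclic (reverse_arc a b D)"
    using assms acyclic_subset[of D "D - {(a, b)}"] by (auto simp: is_dag_def reverse_arc_def)
  moreover have "reverse_arc a b D \<subseteq> {1..n} \<times> {1..n}"
    using assms(1,2) by (auto simp: is_dag_def reverse_arc_def)
  ultimately show ?thesis
    by (simp add: is_dag_def)
qed

text \<open>
  Reverse an arc (a, b) of D1 - D2 with the smallest path interval: since b \<rightarrow> a in D2, any
  other path from a to b in D1 uses an arc of D1 - D2, whose path interval is strictly smaller.
\<close>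
lemma exists_reversible_arc:
  assumes D1: "is_dag n D1" and D2: "is_dag n D2" and skel: "skeleton D1 = skeleton D2"
    and ne: "D1 - D2 \<noteq> {}"
  shows "\<exists>a b. (a, b) \<in> D1 - D2 \<and> is_dag n (reverse_arc a b D1)"
proof -
  obtain e where "e \<in> D1 - D2"
    using ne by blast
  then obtain a b where ab: "(a, b) \<in> D1 - D2"
    and min: "\<And>p q. (p, q) \<in> D1 - D2 \<Longrightarrow> card (path_interval D1 a b) \<le> card (path_interval D1 p q)"
    using ex_has_least_nat[of "\<lambda>e. e \<in> D1 - D2" e "\<lambda>(p, q). card (path_interval D1 p q)"]
    by fastforce
  have acyclic1: "acyclic D1" and acyclic2: "acyclic D2"
    using D1 D2 by (auto simp: is_dag_def)
  have "(b, a) \<in> D2"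
    using arc_of_same_skeleton[OF skel, of a b] ab by auto
  have "(a, b) \<notin> (D1 - {(a, b)})\<^sup>*"
  proof
    assume "(a, b) \<in> (D1 - {(a, b)})\<^sup>*"
    then consider "(a, b) \<in> D2\<^sup>*"
      | p q where "(p, q) \<in> D1 - {(a, b)} - D2" "(a, p) \<in> D1\<^sup>*" "(q, b) \<in> D1\<^sup>*"
      using rtrancl_leaves_subset[of a b "D1 - {(a, b)}" D2] rtrancl_mono[of "D1 - {(a, b)}" D1]
      by blast
    then show False
    proof cases
      case 1
      then have "(a, a) \<in> D2\<^sup>+"
        using \<open>(b, a) \<in> D2\<close> by (meson rtrancl_into_trancl1)
      then show False
        using acyclic2 by (auto simp: acyclic_def)
    next
      case 2
      then have "path_interval D1 p q \<subset> path_interval D1 a b"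
        by (intro path_interval_psubset acyclic1) auto
      then have "card (path_interval D1 p q) < card (path_interval D1 a b)"
        using finite_path_interval[OF finite_dag[OF D1]] by (rule psubset_card_mono[rotated])
      then show False
        using min[of p q] 2 by auto
    qed
  qed
  then show ?thesis
    using is_dag_reverse_arc[OF D1] ab by blast
qed

lemma reversal_walk:
  assumes "is_dag n D1" "is_dag n D2" "skeleton D1 = skeleton D2"
  shows "\<exists>p. successively (poly_adjacent (CIM n (skeleton D2))) p \<and> p \<noteq> []
    \<and> hd p = char_imset n D1 \<and> last p = char_imset n D2 \<and> length p \<le> Suc (card (D1 - D2))"
  using assms
proof (induction "card (D1 - D2)" arbitrary: D1 rule: less_induct)
  case less
  show ?case
  proof (cases "D1 - D2 = {}")
    case True
    then have "D1 = D2"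
      using dag_eq_if_subset less.prems by blast
    then show ?thesis
      by (intro exI[of _ "[char_imset n D2]"]) auto
  next
    case False
    then obtain a b where ab: "(a, b) \<in> D1 - D2" and dag': "is_dag n (reverse_arc a b D1)"
      using exists_reversible_arc less.prems by blast
    interpret arc_reversal n D1 "reverse_arc a b D1" a b
      using less.prems(1) dag' ab by unfold_locales auto
    have "(b, a) \<in> D2"
      using arc_of_same_skeleton[OF less.prems(3), of a b] ab by auto
    then have "reverse_arc a b D1 - D2 = (D1 - D2) - {(a, b)}"
      by (auto simp: reverse_arc_def)
    then have smaller: "card (reverse_arc a b D1 - D2) < card (D1 - D2)"
      using ab finite_dag[OF less.prems(1)] by (simp add: card_Diff1_less del: card_Diff_insert)
    obtain p where p: "successively (poly_adjacent (CIM n (skeleton D2))) p" "p \<noteq> []"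
      "hd p = char_imset n (reverse_arc a b D1)" "last p = char_imset n D2"
      "length p \<le> Suc (card (reverse_arc a b D1 - D2))"
      using less.hyps[OF smaller dag' less.prems(2)] skeleton_reversed less.prems(3) by auto
    show ?thesis
    proof (cases "char_imset n D1 = char_imset n (reverse_arc a b D1)")
      case True
      then show ?thesis
        using p smaller by (intro exI[of _ p]) auto
    next
      case False
      then have "poly_adjacent (CIM n (skeleton D2)) (char_imset n D1) (hd p)"
        using reversal_edge_face less.prems(3) p(3) by (auto intro: poly_adjacentI)
      then show ?thesis
        using p smaller by (intro exI[of _ "char_imset n D1 # p"]) (auto simp: successively_Cons)
    qed
  qed
qed

lemma poly_vertices_CIM:
  "poly_vertices (CIM n E) \<subseteq> char_imset n ` {D. is_dag n D \<and> skeleton D = E}"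
  using extreme_point_of_convex_hull by (auto simp: poly_vertices_def CIM_def)

theorem mainTheorem1:
  fixes n :: nat and E :: "nat set set"
  assumes "undirected_graph n E"
  shows "poly_diam (CIM n E) \<le> enat (card E)"
  \<comment> \<open>The bound holds for every E.\<close>
  unfolding poly_diam_def
proof (intro SUP_least)
  fix u v assume "u \<in> poly_vertices (CIM n E)" "v \<in> poly_vertices (CIM n E)"
  then obtain D1 D2 where D1: "is_dag n D1" "skeleton D1 = E" "u = char_imset n D1"
    and D2: "is_dag n D2" "skeleton D2 = E" "v = char_imset n D2"
    using poly_vertices_CIM by blast
  then obtain p where p: "successively (poly_adjacent (CIM n E)) p" "p \<noteq> []"
    "hd p = u" "last p = v" "length p \<le> Suc (card (D1 - D2))"
    using reversal_walk[of n D1 D2] by auto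
  have "card (D1 - D2) \<le> card E"
    using card_mono[OF finite_dag[OF D1(1)], of "D1 - D2"] card_dag_le_card_skeleton[OF D1(1)] D1(2)
    by simp
  then show "poly_dist (CIM n E) u v \<le> enat (card E)"
    using poly_dist_le_walk[OF p(1,2)] p(3-5) order_trans by fastforce
qed

end
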